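(* Let $\mathfrak g$ be an $8$-dimensional real nilpotent Lie algebra with a complex structure $J$ for which there is a basis $\{\omega^1,\omega^2,\omega^3,\omega^4\}$ of $(1,0)$-forms satisfying $d\omega^1=0$, $d\omega^2=\omega^{14}+\omega^{1\bar4}$, $d\omega^3=a\,\omega^{1\bar1}+\varepsilon(\omega^{12}+\omega^{1\bar2}-\omega^{2\bar1})+i\mu(\omega^{24}+\omega^{2\bar4})$, $d\omega^4=i\nu\,\omega^{1\bar1}-\mu\,\omega^{2\bar2}+ib(\omega^{1\bar2}-\omega^{2\bar1})+i(\omega^{1\bar3}-\omega^{3\bar1})$, with $\varepsilon=\mu=1$, $\nu=0$ and arbitrary $a,b\in\mathbb R$. Then $E_2^{0,2}(\mathfrak g,J)\neq E_3^{0,2}(\mathfrak g,J)$. More precisely, $E_1^{0,2}(\mathfrak g,J)=E_2^{0,2}(\mathfrak g,J)=\langle[i\,\omega^{\bar1\bar2}-\omega^{\bar2\bar4}],[\omega^{\bar1\bar3}-i\,\omega^{\bar3\bar4}]\rangle$ and $E_r^{0,2}(\mathfrak g,J)=\langle[i\,\omega^{\bar1\bar2}-\omega^{\bar2\bar4}]\rangle$ for every $r\ge3$.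
   Context: Notation: $\omega^{jk}=\omega^j\wedge\omega^k$, $\omega^{j\bar k}=\omega^j\wedge\overline{\omega^k}$, $\omega^{\bar j\bar k}=\overline{\omega^j}\wedge\overline{\omega^k}$. For a Lie algebra $\mathfrak g$ with integrable complex structure $J$, $E_r^{p,q}(\mathfrak g,J)$ is the $r$-th page in bidegree $(p,q)$ of the Frölicher spectral sequence of the double complex $(\Lambda^{*,*}(\mathfrak g,J),\partial,\bar\partial)$ of (complex) forms on $\mathfrak g$ of bidegree $(p,q)$ with respect to $J$, where $d=\partial+\bar\partial$ is the Chevalley–Eilenberg differential; $E_1^{p,q}$ is the $\bar\partial$-cohomology and $d_r$ has bidegree $(r,1-r)$. *)

theory Defs
  imports Complex_Main "HOL-Library.Function_Algebras"
begin

text \<open>Complex forms on the 8-dimensional real Lie algebra g, i.e. elements of the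
exterior algebra on the complex coframe
omega^1,...,omega^4, conj omega^1,...,conj omega^4.
Generator index j in 0..3 stands for omega^(j+1), index j in 4..7 for conj omega^(j-3).
A form is given by its coefficients: the coefficient at a set S = {s1 < ... < sk}
of generator indices is the coefficient of e_s1 wedge ... wedge e_sk.\<close>

type_synonym form = "nat set \<Rightarrow> complex"

definition gens :: "nat set" where "gens = {0..<8}"

definition pdeg :: "nat set \<Rightarrow> int" where "pdeg S = int (card (S \<inter> {0..<4}))"
definition qdeg :: "nat set \<Rightarrow> int" where "qdeg S = int (card (S \<inter> {4..<8}))"

definition bideg :: "int \<Rightarrow> int \<Rightarrow> form \<Rightarrow> bool" where
  "bideg p q \<alpha> \<longleftrightarrow> (\<forall>S. \<alpha> S \<noteq> 0 \<longrightarrow> S \<subseteq> gens \<and> pdeg S = p \<and> qdeg S = q)"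

definition smult :: "complex \<Rightarrow> form \<Rightarrow> form" where
  "smult c \<alpha> = (\<lambda>S. c * \<alpha> S)"

definition basis :: "nat set \<Rightarrow> form" where
  "basis S = (\<lambda>T. if T = S then 1 else 0)"

definition e :: "nat \<Rightarrow> form" where "e j = basis {j}"

definition inv_count :: "nat set \<Rightarrow> nat set \<Rightarrow> nat" where
  "inv_count A B = card {(a, b). a \<in> A \<and> b \<in> B \<and> b < a}"

definition wedge :: "form \<Rightarrow> form \<Rightarrow> form" where
  "wedge \<alpha> \<beta> = (\<lambda>S. if S \<subseteq> gens
      then (\<Sum>A\<in>Pow S. (-1) ^ inv_count A (S - A) * \<alpha> A * \<beta> (S - A)) else 0)"

definition sigma :: "nat \<Rightarrow> nat" where
  "sigma j = (if j < 4 then j + 4 else if j < 8 then j - 4 else j)"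

definition conjf :: "form \<Rightarrow> form" where
  "conjf \<alpha> = (\<lambda>T. if T \<subseteq> gens then
      (-1) ^ card {(a, b). a \<in> T \<and> b \<in> T \<and> a < b \<and> sigma b < sigma a} * cnj (\<alpha> (sigma ` T))
    else 0)"

definition w :: "nat \<Rightarrow> form" where "w k = e (k - 1)"
definition wb :: "nat \<Rightarrow> form" where "wb k = e (k + 3)"

definition dw :: "real \<Rightarrow> real \<Rightarrow> real \<Rightarrow> real \<Rightarrow> real \<Rightarrow> nat \<Rightarrow> form" where
  "dw \<epsilon> \<mu> \<nu> a b k =
    (if k = 1 then 0
     else if k = 2 then wedge (w 1) (w 4) + wedge (w 1) (wb 4)
     else if k = 3 then
        smult (of_real a) (wedge (w 1) (wb 1))
      + smult (of_real \<epsilon>) (wedge (w 1) (w 2) + wedge (w 1) (wb 2) - wedge (w 2) (wb 1))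
      + smult (\<i> * of_real \<mu>) (wedge (w 2) (w 4) + wedge (w 2) (wb 4))
     else if k = 4 then
        smult (\<i> * of_real \<nu>) (wedge (w 1) (wb 1))
      - smult (of_real \<mu>) (wedge (w 2) (wb 2))
      + smult (\<i> * of_real b) (wedge (w 1) (wb 2) - wedge (w 2) (wb 1))
      + smult \<i> (wedge (w 1) (wb 3) - wedge (w 3) (wb 1))
     else 0)"

text \<open>d of the generator with index j (d conj omega = conj d omega)\<close>
definition dgen :: "real \<Rightarrow> real \<Rightarrow> real \<Rightarrow> real \<Rightarrow> real \<Rightarrow> nat \<Rightarrow> form" where
  "dgen \<epsilon> \<mu> \<nu> a b j =
    (if j < 4 then dw \<epsilon> \<mu> \<nu> a b (j + 1)
     else if j < 8 then conjf (dw \<epsilon> \<mu> \<nu> a b (j - 3)) else 0)"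

text \<open>d extended as an antiderivation:
  d(e_s1 ... e_sk) = sum_i (-1)^(i-1) e_s1 ... d e_si ... e_sk
                   = sum_i (-1)^(i-1) (d e_si) wedge e_(S - {si})  (d e_si has even degree)\<close>
definition dbasis :: "real \<Rightarrow> real \<Rightarrow> real \<Rightarrow> real \<Rightarrow> real \<Rightarrow> nat set \<Rightarrow> form" where
  "dbasis \<epsilon> \<mu> \<nu> a b S =
    (\<Sum>j\<in>S. smult ((-1) ^ card {s\<in>S. s < j}) (wedge (dgen \<epsilon> \<mu> \<nu> a b j) (basis (S - {j}))))"

definition dform :: "real \<Rightarrow> real \<Rightarrow> real \<Rightarrow> real \<Rightarrow> real \<Rightarrow> form \<Rightarrow> form" where
  "dform \<epsilon> \<mu> \<nu> a b \<alpha> = (\<lambda>T. \<Sum>S\<in>Pow gens. \<alpha> S * dbasis \<epsilon> \<mu> \<nu> a b S T)"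

definition del :: "real \<Rightarrow> real \<Rightarrow> real \<Rightarrow> real \<Rightarrow> real \<Rightarrow> form \<Rightarrow> form" where
  "del \<epsilon> \<mu> \<nu> a b \<alpha> = (\<lambda>T. \<Sum>S\<in>Pow gens.
      if pdeg T = pdeg S + 1 \<and> qdeg T = qdeg S then \<alpha> S * dbasis \<epsilon> \<mu> \<nu> a b S T else 0)"

definition dbar :: "real \<Rightarrow> real \<Rightarrow> real \<Rightarrow> real \<Rightarrow> real \<Rightarrow> form \<Rightarrow> form" where
  "dbar \<epsilon> \<mu> \<nu> a b \<alpha> = (\<lambda>T. \<Sum>S\<in>Pow gens.
      if pdeg T = pdeg S \<and> qdeg T = qdeg S + 1 then \<alpha> S * dbasis \<epsilon> \<mu> \<nu> a b S T else 0)"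

text \<open>Frolicher spectral sequence of the double complex (A, dl, db):
  E_r^{p,q} = Z_r^{p,q} / B_r^{p,q} (r >= 1), with the standard zig-zag description.\<close>
definition Zr :: "(form \<Rightarrow> form) \<Rightarrow> (form \<Rightarrow> form) \<Rightarrow> nat \<Rightarrow> int \<Rightarrow> int \<Rightarrow> form set" where
  "Zr dl db r p q = {x. bideg p q x \<and> db x = 0 \<and>
     (\<exists>y :: nat \<Rightarrow> form. y 0 = x \<and>
        (\<forall>i\<in>{1..<r}. bideg (p + int i) (q - int i) (y i) \<and> dl (y (i - 1)) + db (y i) = 0))}"

definition Br :: "(form \<Rightarrow> form) \<Rightarrow> (form \<Rightarrow> form) \<Rightarrow> nat \<Rightarrow> int \<Rightarrow> int \<Rightarrow> form set" where
  "Br dl db r p q = {x. bideg p q x \<and>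
     (\<exists>y :: nat \<Rightarrow> form. bideg p (q - 1) (y 0) \<and>
        (\<forall>i\<in>{1..<r}. bideg (p - int i) (q + int i - 1) (y i)) \<and>
        (\<forall>i\<ge>r. y i = 0) \<and>
        x = db (y 0) + dl (y 1) \<and>
        (\<forall>i\<in>{1..<r}. db (y i) + dl (y (i + 1)) = 0))}"

definition lincomb :: "complex list \<Rightarrow> form list \<Rightarrow> form" where
  "lincomb cs vs = (\<Sum>i<length vs. smult (cs ! i) (vs ! i))"

definition classes_basis :: "form set \<Rightarrow> form set \<Rightarrow> form list \<Rightarrow> bool" where
  "classes_basis Z B vs \<longleftrightarrow> set vs \<subseteq> Z
     \<and> (\<forall>cs. length cs = length vs \<longrightarrow> lincomb cs vs \<in> B \<longrightarrow> (\<forall>c\<in>set cs. c = 0))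
     \<and> (\<forall>x\<in>Z. \<exists>cs. length cs = length vs \<and> x - lincomb cs vs \<in> B)"

definition Z_page where "Z_page \<epsilon> \<mu> \<nu> a b r p q = Zr (del \<epsilon> \<mu> \<nu> a b) (dbar \<epsilon> \<mu> \<nu> a b) r p q"
definition B_page where "B_page \<epsilon> \<mu> \<nu> a b r p q = Br (del \<epsilon> \<mu> \<nu> a b) (dbar \<epsilon> \<mu> \<nu> a b) r p q"

end

theory Submission
  imports Defs
begin

text \<open>
  The first page E_1^{0,2} is the dbar-cohomology of the (0,2)-forms; solving dbar x = 0 and
  x - (c alpha + x_13 beta) = dbar z coefficientwise shows that [alpha] and [beta] form a basis of it.
  Here x_13 denotes the coefficient of conj omega^1 wedge conj omega^3 (index set {4,6}).
  Since there are no forms of negative p-degree, B_r^{0,2} = dbar A^{0,1} for every r >= 1, so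
  the pages can only shrink through Z_r. The form alpha extends to a zigzag of any length,
  del alpha = - dbar (omega^4 wedge conj omega^2) with del (omega^4 wedge conj omega^2) = 0, and beta
  extends by one step, so both classes survive to E_2. For x in Z_3 the zigzag equations
  del x + dbar y1 = 0 and del y1 + dbar y2 = 0 are finitely many linear equations in the
  coefficients; eliminating y1 and y2 expresses both x_13 and -2 x_13 as i times the coefficient of
  omega^3 wedge conj omega^4 in y1. Hence x_13 = 0 and [beta] does not survive to E_3.
\<close>

section \<open>Coefficients of wedge products and conjugates\<close>

lemma sum_fun_apply: "(\<Sum>j\<in>S. f j) x = (\<Sum>j\<in>S. f j x)"
  by (induction S rule: infinite_finite_induct) auto

lemma smult_apply [simp]: "smult c f S = c * f S"
  by (simp add: smult_def)

lemma smult_zero_left [simp]: "smult 0 f = 0"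
  by (rule ext) simp

lemma smult_one [simp]: "smult 1 f = f"
  by (rule ext) simp

text \<open>Stated through inclusions so that the simplifier decides equality of explicit finite sets.\<close>
lemma basis_apply: "basis S U = (if S \<subseteq> U \<and> U \<subseteq> S then 1 else 0)"
  by (auto simp: basis_def)

lemma finite_subset_gens: "T \<subseteq> gens \<Longrightarrow> finite T"
  by (simp add: gens_def finite_subset)

lemma card_filter_eq_sum: "finite B \<Longrightarrow> card {b\<in>B. P b} = (\<Sum>b\<in>B. if P b then 1 else 0)"
  by (simp add: sum.inter_filter[symmetric])

lemma card_pairs_eq_sum:
  assumes "finite A" "finite B"
  shows "card {(a, b). a \<in> A \<and> b \<in> B \<and> P a b} = (\<Sum>a\<in>A. \<Sum>b\<in>B. if P a b then 1 else 0)"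
proof -
  have "{(a, b). a \<in> A \<and> b \<in> B \<and> P a b} = Sigma A (\<lambda>a. {b\<in>B. P a b})"
    by auto
  then show ?thesis
    using assms by (simp add: card_filter_eq_sum)
qed

lemma inv_count_eq_sum:
  "finite A \<Longrightarrow> finite B \<Longrightarrow> inv_count A B = (\<Sum>a\<in>A. \<Sum>b\<in>B. if b < a then 1 else 0)"
  unfolding inv_count_def by (rule card_pairs_eq_sum)

lemma wedge_basis_right:
  "wedge f (basis B) T =
     (if T \<subseteq> gens \<and> B \<subseteq> T then (-1) ^ inv_count (T - B) B * f (T - B) else 0)"
proof (cases "T \<subseteq> gens")
  case True
  have basis_diff: "basis B (T - A) = (if A = T - B \<and> B \<subseteq> T then 1 else 0)" if "A \<subseteq> T" for A
    using that by (simp add: basis_def) blast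
  have "wedge f (basis B) T = (\<Sum>A\<in>Pow T. (-1) ^ inv_count A (T - A) * f A * basis B (T - A))"
    using True by (simp add: wedge_def)
  also have "\<dots> =
      (\<Sum>A\<in>Pow T. if A = T - B then if B \<subseteq> T then (-1) ^ inv_count A (T - A) * f A else 0 else 0)"
    using basis_diff by (intro sum.cong) simp_all
  also have "\<dots> = (if B \<subseteq> T then (-1) ^ inv_count (T - B) B * f (T - B) else 0)"
    using True finite_subset_gens by (auto simp: double_diff)
  finally show ?thesis
    using True by simp
qed (simp add: wedge_def)

lemma wedge_basis:
  "wedge (basis A) (basis B) =
     (if A \<inter> B = {} \<and> A \<union> B \<subseteq> gens then smult ((-1) ^ inv_count A B) (basis (A \<union> B)) else 0)"
    (is "_ = ?rhs")
proof
  fix T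
  show "wedge (basis A) (basis B) T = ?rhs T"
  proof (cases "A \<inter> B = {} \<and> A \<union> B \<subseteq> gens \<and> T = A \<union> B")
    case True
    then have "T \<subseteq> gens" "B \<subseteq> T" "T - B = A"
      by auto
    with True show ?thesis
      by (simp add: wedge_basis_right basis_apply)
  next
    case False
    then have "\<not> (T \<subseteq> gens \<and> B \<subseteq> T \<and> T - B = A)" "?rhs T = 0"
      by (auto simp: basis_def)
    then show ?thesis
      by (auto simp: wedge_basis_right basis_apply)
  qed
qed

lemma sigma_sigma [simp]: "sigma (sigma j) = j"
  by (cases "j < 4"; cases "j < 8"; simp add: sigma_def)

lemma conjf_basis:
  "conjf (basis S) =
     (if sigma ` S \<subseteq> gens then
        smult ((-1) ^ (\<Sum>a\<in>sigma ` S. \<Sum>b\<in>sigma ` S. if a < b \<and> sigma b < sigma a then 1 else 0))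
          (basis (sigma ` S))
      else 0)"
    (is "_ = ?rhs")
proof
  fix T
  have "sigma ` sigma ` A = A" for A
    by (simp add: image_image)
  then have sigma_image_eq: "sigma ` T = S \<longleftrightarrow> T = sigma ` S"
    by metis
  show "conjf (basis S) T = ?rhs T"
  proof (cases "T = sigma ` S")
    case True
    then have "basis S (sigma ` T) = 1"
      using sigma_image_eq by (simp add: basis_apply)
    with True show ?thesis
      by (simp add: conjf_def basis_apply card_pairs_eq_sum finite_subset_gens)
  next
    case False
    then have "basis S (sigma ` T) = 0"
      using sigma_image_eq by (simp add: basis_def)
    with False show ?thesis
      by (simp add: conjf_def basis_def)
  qed
qed

lemma conjf_add: "conjf (f + g) = conjf f + conjf g"
  by (rule ext) (simp add: conjf_def distrib_left)

lemma conjf_diff: "conjf (f - g) = conjf f - conjf g"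
  by (rule ext) (simp add: conjf_def right_diff_distrib)

lemma conjf_smult: "conjf (smult c f) = smult (cnj c) (conjf f)"
  by (rule ext) (simp add: conjf_def)

lemma conjf_zero: "conjf 0 = 0"
  by (rule ext) (simp add: conjf_def)

section \<open>Bidegrees and the operators del and dbar\<close>

lemma dbasis_apply:
  assumes "finite S"
  shows "dbasis \<epsilon> \<mu> \<nu> a b S T =
    (\<Sum>j\<in>S. (-1) ^ (\<Sum>s\<in>S. if s < j then 1 else 0) *
      (if T \<subseteq> gens \<and> S - {j} \<subseteq> T
       then (-1) ^ (\<Sum>x\<in>T - (S - {j}). \<Sum>y\<in>S - {j}. if y < x then 1 else 0)
         * dgen \<epsilon> \<mu> \<nu> a b j (T - (S - {j}))
       else 0))"
  unfolding dbasis_def sum_fun_apply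
  using assms by (intro sum.cong) (auto simp: wedge_basis_right card_filter_eq_sum inv_count_eq_sum finite_subset_gens)

lemma dbasis_nonzero_subset_gens: "dbasis \<epsilon> \<mu> \<nu> a b S T \<noteq> 0 \<Longrightarrow> T \<subseteq> gens"
  by (rule ccontr) (simp add: dbasis_def sum_fun_apply wedge_basis_right)

lemma bideg_zero [simp]: "bideg p q 0"
  by (simp add: bideg_def)

lemma bideg_neg_pdeg: "p < 0 \<Longrightarrow> bideg p q f \<Longrightarrow> f = 0"
  by (rule ext) (auto simp: bideg_def pdeg_def)

lemma bideg_add: "bideg p q f \<Longrightarrow> bideg p q g \<Longrightarrow> bideg p q (f + g)"
  unfolding bideg_def by (metis add.right_neutral plus_fun_apply)

lemma bideg_diff: "bideg p q f \<Longrightarrow> bideg p q g \<Longrightarrow> bideg p q (f - g)"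
  unfolding bideg_def by (metis diff_zero minus_apply)

lemma bideg_smult: "bideg p q f \<Longrightarrow> bideg p q (smult c f)"
  by (simp add: bideg_def)

lemma bideg_basis: "S \<subseteq> gens \<Longrightarrow> pdeg S = p \<Longrightarrow> qdeg S = q \<Longrightarrow> bideg p q (basis S)"
  by (simp add: bideg_def basis_def)

definition matrix_op :: "(nat set \<Rightarrow> nat set \<Rightarrow> complex) \<Rightarrow> form \<Rightarrow> form" where
  "matrix_op K f = (\<lambda>T. \<Sum>S\<in>Pow gens. f S * K S T)"

lemma del_eq_matrix_op:
  "del \<epsilon> \<mu> \<nu> a b =
     matrix_op (\<lambda>S T. if pdeg T = pdeg S + 1 \<and> qdeg T = qdeg S then dbasis \<epsilon> \<mu> \<nu> a b S T else 0)"
  by (auto simp: del_def matrix_op_def fun_eq_iff intro!: sum.cong)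

lemma dbar_eq_matrix_op:
  "dbar \<epsilon> \<mu> \<nu> a b =
     matrix_op (\<lambda>S T. if pdeg T = pdeg S \<and> qdeg T = qdeg S + 1 then dbasis \<epsilon> \<mu> \<nu> a b S T else 0)"
  by (auto simp: dbar_def matrix_op_def fun_eq_iff intro!: sum.cong)

lemma matrix_op_add: "matrix_op K (f + g) = matrix_op K f + matrix_op K g"
  by (rule ext) (simp add: matrix_op_def distrib_right sum.distrib)

lemma matrix_op_diff: "matrix_op K (f - g) = matrix_op K f - matrix_op K g"
  by (rule ext) (simp add: matrix_op_def left_diff_distrib sum_subtractf)

lemma matrix_op_smult: "matrix_op K (smult c f) = smult c (matrix_op K f)"
  by (rule ext) (simp add: matrix_op_def sum_distrib_left mult.assoc)

lemma matrix_op_zero [simp]: "matrix_op K 0 = 0"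
  by (rule ext) (simp add: matrix_op_def)

lemma matrix_op_basis: "matrix_op K (basis S) T = (if S \<subseteq> gens then K S T else 0)"
proof -
  have "matrix_op K (basis S) T = (\<Sum>S'\<in>Pow gens. if S' = S then K S T else 0)"
    unfolding matrix_op_def by (intro sum.cong) (auto simp: basis_def)
  then show ?thesis
    by (simp add: gens_def)
qed

lemma bideg_matrix_op:
  assumes f: "bideg p q f"
    and K: "\<And>S T. K S T \<noteq> 0 \<Longrightarrow> T \<subseteq> gens \<and> pdeg T = pdeg S + p' \<and> qdeg T = qdeg S + q'"
  shows "bideg (p + p') (q + q') (matrix_op K f)"
  unfolding bideg_def
proof (intro allI impI)
  fix T
  assume "matrix_op K f T \<noteq> 0"
  then obtain S where "f S * K S T \<noteq> 0"
    unfolding matrix_op_def by (meson sum.neutral)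
  then show "T \<subseteq> gens \<and> pdeg T = p + p' \<and> qdeg T = q + q'"
    using f K unfolding bideg_def by auto
qed

lemma bideg_del: "bideg p q f \<Longrightarrow> bideg (p + 1) q (del \<epsilon> \<mu> \<nu> a b f)"
  unfolding del_eq_matrix_op
  by (rule bideg_matrix_op[where q' = 0, simplified]) (auto split: if_splits dest: dbasis_nonzero_subset_gens)

lemma bideg_dbar: "bideg p q f \<Longrightarrow> bideg p (q + 1) (dbar \<epsilon> \<mu> \<nu> a b f)"
  unfolding dbar_eq_matrix_op
  by (rule bideg_matrix_op[where p' = 0, simplified]) (auto split: if_splits dest: dbasis_nonzero_subset_gens)

lemma del_add: "del \<epsilon> \<mu> \<nu> a b (f + g) = del \<epsilon> \<mu> \<nu> a b f + del \<epsilon> \<mu> \<nu> a b g"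
  by (simp add: del_eq_matrix_op matrix_op_add)

lemma del_diff: "del \<epsilon> \<mu> \<nu> a b (f - g) = del \<epsilon> \<mu> \<nu> a b f - del \<epsilon> \<mu> \<nu> a b g"
  by (simp add: del_eq_matrix_op matrix_op_diff)

lemma del_smult: "del \<epsilon> \<mu> \<nu> a b (smult c f) = smult c (del \<epsilon> \<mu> \<nu> a b f)"
  by (simp add: del_eq_matrix_op matrix_op_smult)

lemma del_zero [simp]: "del \<epsilon> \<mu> \<nu> a b 0 = 0"
  by (simp add: del_eq_matrix_op)

lemma dbar_add: "dbar \<epsilon> \<mu> \<nu> a b (f + g) = dbar \<epsilon> \<mu> \<nu> a b f + dbar \<epsilon> \<mu> \<nu> a b g"
  by (simp add: dbar_eq_matrix_op matrix_op_add)

lemma dbar_diff: "dbar \<epsilon> \<mu> \<nu> a b (f - g) = dbar \<epsilon> \<mu> \<nu> a b f - dbar \<epsilon> \<mu> \<nu> a b g"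
  by (simp add: dbar_eq_matrix_op matrix_op_diff)

lemma dbar_smult: "dbar \<epsilon> \<mu> \<nu> a b (smult c f) = smult c (dbar \<epsilon> \<mu> \<nu> a b f)"
  by (simp add: dbar_eq_matrix_op matrix_op_smult)

lemma dbar_zero [simp]: "dbar \<epsilon> \<mu> \<nu> a b 0 = 0"
  by (simp add: dbar_eq_matrix_op)

lemma del_basis:
  "del \<epsilon> \<mu> \<nu> a b (basis S) T =
     (if S \<subseteq> gens \<and> pdeg T = pdeg S + 1 \<and> qdeg T = qdeg S then dbasis \<epsilon> \<mu> \<nu> a b S T else 0)"
  by (simp add: del_eq_matrix_op matrix_op_basis)

lemma dbar_basis:
  "dbar \<epsilon> \<mu> \<nu> a b (basis S) T =
     (if S \<subseteq> gens \<and> pdeg T = pdeg S \<and> qdeg T = qdeg S + 1 then dbasis \<epsilon> \<mu> \<nu> a b S T else 0)"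
  by (simp add: dbar_eq_matrix_op matrix_op_basis)

section \<open>Evaluation over explicit lists of index sets\<close>

text \<open>The index sets of each bidegree are listed explicitly, so that a sum over a bidegree
  becomes a finite list that the simplifier evaluates.\<close>

definition holo_sets :: "int \<Rightarrow> nat set list" where
  "holo_sets k =
     (if k = 0 then [{}]
      else if k = 1 then [{0}, {1}, {2}, {3}]
      else if k = 2 then [{0,1}, {0,2}, {0,3}, {1,2}, {1,3}, {2,3}]
      else if k = 3 then [{0,1,2}, {0,1,3}, {0,2,3}, {1,2,3}]
      else if k = 4 then [{0,1,2,3}]
      else [])"

definition antiholo_sets :: "int \<Rightarrow> nat set list" where
  "antiholo_sets k =
     (if k = 0 then [{}]
      else if k = 1 then [{4}, {5}, {6}, {7}]
      else if k = 2 then [{4,5}, {4,6}, {4,7}, {5,6}, {5,7}, {6,7}]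
      else if k = 3 then [{4,5,6}, {4,5,7}, {4,6,7}, {5,6,7}]
      else if k = 4 then [{4,5,6,7}]
      else [])"

definition bideg_sets :: "int \<Rightarrow> int \<Rightarrow> nat set list" where
  "bideg_sets p q = concat (map (\<lambda>A. map ((\<union>) A) (antiholo_sets q)) (holo_sets p))"

lemma mem_set_by_card:
  assumes "distinct xs" and "\<forall>ys\<in>set (subseqs xs). set ys \<in> set (L (int (length ys)))"
    and "A \<subseteq> set xs"
  shows "A \<in> set (L (int (card A)))"
proof -
  obtain ys where ys: "ys \<in> set (subseqs xs)" and A: "A = set ys"
    using subset_subseqs[OF assms(3)] by blast
  have "distinct ys"
    using ys assms(1) by (rule subseqs_distinctD)
  moreover have "set ys \<in> set (L (int (length ys)))"
    using assms(2) ys by blast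
  ultimately show ?thesis
    unfolding A by (simp add: distinct_card)
qed

lemma mem_holo_sets: "A \<subseteq> {0..<4} \<Longrightarrow> A \<in> set (holo_sets (int (card A)))"
  by (rule mem_set_by_card[of "[0, 1, 2, 3]"]) (auto simp: holo_sets_def)

lemma mem_antiholo_sets: "B \<subseteq> {4..<8} \<Longrightarrow> B \<in> set (antiholo_sets (int (card B)))"
  by (rule mem_set_by_card[of "[4, 5, 6, 7]"]) (auto simp: antiholo_sets_def)

lemma mem_bideg_sets: "S \<subseteq> gens \<Longrightarrow> S \<in> set (bideg_sets (pdeg S) (qdeg S))"
proof -
  assume "S \<subseteq> gens"
  then have "S = (S \<inter> {0..<4}) \<union> (S \<inter> {4..<8})"
    by (auto simp: gens_def)
  moreover have "S \<inter> {0..<4} \<in> set (holo_sets (pdeg S))" "S \<inter> {4..<8} \<in> set (antiholo_sets (qdeg S))"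
    unfolding pdeg_def qdeg_def by (simp_all add: mem_holo_sets mem_antiholo_sets)
  ultimately show ?thesis
    unfolding bideg_sets_def by auto
qed

lemma distinct_holo_sets: "distinct (holo_sets k)"
proof -
  have "distinct (map (\<lambda>S. \<Sum>i\<in>S. (2::nat) ^ i) (holo_sets k))"
    by (simp add: holo_sets_def)
  then show ?thesis
    by (simp add: distinct_map)
qed

lemma distinct_union_blocks:
  assumes "distinct Xs" "distinct Ys"
    and "\<And>X. X \<in> set Xs \<Longrightarrow> X \<subseteq> L" "\<And>Y. Y \<in> set Ys \<Longrightarrow> Y \<inter> L = {}"
  shows "distinct (concat (map (\<lambda>X. map ((\<union>) X) Ys) Xs))"
  using assms
proof (induction Xs)
  case (Cons X Xs)
  have split: "(X' \<union> Y) \<inter> L = X'" "(X' \<union> Y) - L = Y" if "X' \<subseteq> L" "Y \<inter> L = {}" for X' Y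
    using that by auto
  have "inj_on ((\<union>) X) (set Ys)"
    by (rule inj_onI) (metis split Cons.prems(3,4) list.set_intros(1))
  moreover have "X \<union> Y \<noteq> X' \<union> Y'" if "Y \<in> set Ys" "X' \<in> set Xs" "Y' \<in> set Ys" for Y X' Y'
    using that split Cons.prems by (metis distinct.simps(2) list.set_intros)
  ultimately show ?case
    using Cons by (auto simp: distinct_map)
qed simp

lemma distinct_antiholo_sets: "distinct (antiholo_sets k)"
proof -
  have "distinct (map (\<lambda>S. \<Sum>i\<in>S. (2::nat) ^ i) (antiholo_sets k))"
    by (simp add: antiholo_sets_def)
  then show ?thesis
    by (simp add: distinct_map)
qed

lemma distinct_bideg_sets: "distinct (bideg_sets p q)"
proof -
  have "\<forall>X\<in>set (holo_sets p). X \<subseteq> {0..<4}"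
    by (simp add: holo_sets_def)
  moreover have "\<forall>Y\<in>set (antiholo_sets q). Y \<inter> {0..<4} = {}"
    by (simp add: antiholo_sets_def)
  ultimately show ?thesis
    unfolding bideg_sets_def
    by (intro distinct_union_blocks[where L = "{0..<4}"] distinct_holo_sets distinct_antiholo_sets) blast+
qed

lemma matrix_op_expand:
  assumes "bideg p q f"
  shows "matrix_op K f T = sum_list (map (\<lambda>S. f S * K S T) (bideg_sets p q))"
proof -
  have fin: "finite (Pow gens \<union> set (bideg_sets p q))"
    by (simp add: gens_def)
  have "matrix_op K f T = (\<Sum>S\<in>Pow gens \<union> set (bideg_sets p q). f S * K S T)"
    unfolding matrix_op_def
    using assms by (intro sum.mono_neutral_left[OF fin]) (auto simp: bideg_def)
  also have "\<dots> = (\<Sum>S\<in>set (bideg_sets p q). f S * K S T)"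
    using assms mem_bideg_sets by (intro sum.mono_neutral_right[OF fin]) (auto simp: bideg_def)
  also have "\<dots> = sum_list (map (\<lambda>S. f S * K S T) (bideg_sets p q))"
    by (simp add: distinct_bideg_sets sum.distinct_set_conv_list)
  finally show ?thesis .
qed

text \<open>Phrased with an image rather than a bounded quantifier: the simplifier then evaluates f
  at each explicit index set instead of first expanding f T symbolically under the binder.\<close>

lemma bideg_eq_zeroI:
  assumes f: "bideg p q f" and vanish: "f ` set (bideg_sets p q) \<subseteq> {0}"
  shows "f = 0"
proof
  fix S
  show "f S = 0 S"
  proof (rule ccontr)
    assume "f S \<noteq> 0 S"
    then have "S \<in> set (bideg_sets p q)"
      using f mem_bideg_sets unfolding bideg_def by fastforce
    then show False
      using vanish \<open>f S \<noteq> 0 S\<close> by auto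
  qed
qed

lemma del_expand:
  "bideg p q f \<Longrightarrow> del \<epsilon> \<mu> \<nu> a b f T =
     sum_list (map (\<lambda>S. f S *
       (if pdeg T = pdeg S + 1 \<and> qdeg T = qdeg S then dbasis \<epsilon> \<mu> \<nu> a b S T else 0)) (bideg_sets p q))"
  unfolding del_eq_matrix_op by (rule matrix_op_expand)

lemma dbar_expand:
  "bideg p q f \<Longrightarrow> dbar \<epsilon> \<mu> \<nu> a b f T =
     sum_list (map (\<lambda>S. f S *
       (if pdeg T = pdeg S \<and> qdeg T = qdeg S + 1 then dbasis \<epsilon> \<mu> \<nu> a b S T else 0)) (bideg_sets p q))"
  unfolding dbar_eq_matrix_op by (rule matrix_op_expand)

section \<open>The pages on the row p = 0\<close>

lemma Zr_antimono: "r \<le> r' \<Longrightarrow> Zr dl db r' p q \<subseteq> Zr dl db r p q"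
  unfolding Zr_def by fastforce

lemma Zr_zigzag3:
  assumes "x \<in> Zr dl db r p q" and "3 \<le> r"
  obtains y1 y2 where "bideg (p + 1) (q - 1) y1" "bideg (p + 2) (q - 2) y2"
    "dl x + db y1 = 0" "dl y1 + db y2 = 0"
proof -
  obtain y where "y 0 = x"
    and y: "\<forall>i\<in>{1..<r}. bideg (p + int i) (q - int i) (y i) \<and> dl (y (i - 1)) + db (y i) = 0"
    using assms(1) unfolding Zr_def by blast
  moreover have "1 \<in> {1..<r}" "2 \<in> {1..<r}"
    using assms(2) by auto
  ultimately show ?thesis
    using that[of "y 1" "y 2"] by fastforce
qed

lemma Zr_2I:
  assumes "bideg p q x" "db x = 0" "bideg (p + 1) (q - 1) y" "dl x + db y = 0"
  shows "x \<in> Zr dl db 2 p q"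
proof -
  have "{1..<2::nat} = {1}"
    by auto
  then show ?thesis
    using assms unfolding Zr_def by (intro CollectI conjI exI[of _ "\<lambda>i. if i = 0 then x else y"]) auto
qed

lemma Zr_all_pagesI:
  assumes "bideg p q x" "db x = 0" "bideg (p + 1) (q - 1) y" "dl x + db y = 0" "dl y = 0"
    and "dl 0 = 0" "db 0 = 0"
  shows "x \<in> Zr dl db r p q"
  using assms unfolding Zr_def
  by (intro CollectI conjI exI[of _ "\<lambda>i. if i = 0 then x else if i = 1 then y else 0"]) auto

lemma Br_bottom_row:
  assumes "1 \<le> r" "dl 0 = 0" "db 0 = 0"
  shows "Br dl db r 0 q = {x. bideg 0 q x \<and> (\<exists>z. bideg 0 (q - 1) z \<and> x = db z)}"
proof (intro set_eqI iffI)
  fix x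
  assume "x \<in> Br dl db r 0 q"
  then obtain y where "bideg 0 q x" "bideg 0 (q - 1) (y 0)" "x = db (y 0) + dl (y 1)"
    and y: "\<forall>i\<in>{1..<r}. bideg (0 - int i) (q + int i - 1) (y i)" "\<forall>i\<ge>r. y i = 0"
    unfolding Br_def by blast
  moreover have "y 1 = 0"
  proof (cases "r = 1")
    case False
    then have "bideg (- 1) q (y 1)"
      using y(1) assms(1) by force
    then show ?thesis
      by (rule bideg_neg_pdeg[rotated]) simp
  qed (use y(2) in simp)
  ultimately show "x \<in> {x. bideg 0 q x \<and> (\<exists>z. bideg 0 (q - 1) z \<and> x = db z)}"
    using assms(2) by auto
next
  fix x
  assume "x \<in> {x. bideg 0 q x \<and> (\<exists>z. bideg 0 (q - 1) z \<and> x = db z)}"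
  then obtain z where "bideg 0 q x" "bideg 0 (q - 1) z" "x = db z"
    by blast
  then show "x \<in> Br dl db r 0 q"
    using assms unfolding Br_def by (intro CollectI conjI exI[of _ "\<lambda>i. if i = 0 then z else 0"]) auto
qed

section \<open>The structure equations with eps = mu = 1 and nu = 0\<close>

lemma dgen_values:
  "dgen 1 1 0 a b 0 = 0"
  "dgen 1 1 0 a b 1 = basis {0,3} + basis {0,7}"
  "dgen 1 1 0 a b 2 = smult a (basis {0,4}) + basis {0,1} + basis {0,5} - basis {1,4}
     + smult \<i> (basis {1,3} + basis {1,7})"
  "dgen 1 1 0 a b 3 = - basis {1,5} + smult (\<i> * b) (basis {0,5} - basis {1,4})
     + smult \<i> (basis {0,6} - basis {2,4})"
  "dgen 1 1 0 a b 4 = 0"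
  "dgen 1 1 0 a b 5 = basis {4,7} - basis {3,4}"
  "dgen 1 1 0 a b 6 = - smult a (basis {0,4}) + basis {4,5} - basis {1,4} + basis {0,5}
     - smult \<i> (basis {5,7} - basis {3,5})"
  "dgen 1 1 0 a b 7 = basis {1,5} + smult (\<i> * b) (basis {1,4} - basis {0,5})
     + smult \<i> (basis {2,4} - basis {0,6})"
  by (simp_all add: dgen_def dw_def w_def wb_def e_def wedge_basis conjf_add conjf_diff conjf_smult
      conjf_zero inv_count_eq_sum gens_def conjf_basis sigma_def insert_commute fun_eq_iff algebra_simps)

text \<open>Computations with explicit sets present the index 1 as Suc 0.\<close>

lemmas dgen_Suc_0 = dgen_values(2)[unfolded One_nat_def]

lemmas eval_simps = del_add del_diff del_smult dbar_add dbar_diff dbar_smult del_basis dbar_basis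
  dbasis_apply dgen_values dgen_Suc_0 basis_apply gens_def insert_Diff_if pdeg_def qdeg_def
  bideg_sets_def holo_sets_def antiholo_sets_def

definition alpha :: form where
  "alpha = smult \<i> (wedge (wb 1) (wb 2)) - wedge (wb 2) (wb 4)"

definition beta :: form where
  "beta = wedge (wb 1) (wb 3) - smult \<i> (wedge (wb 3) (wb 4))"

lemma alpha_eq: "alpha = smult \<i> (basis {4,5}) - basis {5,7}"
  by (simp add: alpha_def wb_def e_def wedge_basis inv_count_eq_sum gens_def insert_commute)

lemma beta_eq: "beta = basis {4,6} - smult \<i> (basis {6,7})"
  by (simp add: beta_def wb_def e_def wedge_basis inv_count_eq_sum gens_def insert_commute)

definition alpha_partner :: form where
  "alpha_partner = basis {3,5}"

definition beta_partner :: "real \<Rightarrow> form" where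
  "beta_partner a = basis {0,6} + smult (\<i> / 2) (basis {1,5}) + smult (\<i> / 2) (basis {2,7})
     + smult \<i> (basis {3,6}) + smult (3 / 2 * \<i> * a) (basis {0,5})"

lemma bideg_alpha: "bideg 0 2 alpha"
  and bideg_beta: "bideg 0 2 beta"
  and bideg_alpha_partner: "bideg 1 1 alpha_partner"
  and bideg_beta_partner: "bideg 1 1 (beta_partner a)"
  unfolding alpha_eq beta_eq alpha_partner_def beta_partner_def
  by (intro bideg_add bideg_diff bideg_smult bideg_basis; simp add: gens_def pdeg_def qdeg_def)+

lemma dbar_alpha: "dbar 1 1 0 a b alpha = 0"
  using bideg_dbar[OF bideg_alpha] by (rule bideg_eq_zeroI) (simp add: alpha_eq eval_simps)

lemma dbar_beta: "dbar 1 1 0 a b beta = 0"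
  using bideg_dbar[OF bideg_beta] by (rule bideg_eq_zeroI) (simp add: beta_eq eval_simps)

lemma del_alpha_partner: "del 1 1 0 a b alpha_partner = 0"
  using bideg_del[OF bideg_alpha_partner] by (rule bideg_eq_zeroI) (simp add: alpha_partner_def eval_simps)

lemma del_alpha_dbar_exact: "del 1 1 0 a b alpha + dbar 1 1 0 a b alpha_partner = 0"
  using bideg_add[OF bideg_del[OF bideg_alpha, simplified] bideg_dbar[OF bideg_alpha_partner, simplified]]
  by (rule bideg_eq_zeroI) (simp add: alpha_eq alpha_partner_def eval_simps)

lemma del_beta_dbar_exact: "del 1 1 0 a b beta + dbar 1 1 0 a b (beta_partner a) = 0"
  using bideg_add[OF bideg_del[OF bideg_beta, simplified] bideg_dbar[OF bideg_beta_partner, simplified]]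
  by (rule bideg_eq_zeroI) (simp add: beta_eq beta_partner_def eval_simps)

lemma dbar_01_coeffs:
  assumes "bideg 0 1 z"
  shows "dbar 1 1 0 a b z {4,5} = z {6}" "dbar 1 1 0 a b z {4,6} = 0" "dbar 1 1 0 a b z {5,7} = - \<i> * z {6}"
  by (simp_all add: dbar_expand[OF assms] eval_simps)

lemma dbar_02_coeffs:
  assumes "bideg 0 2 x"
  shows "dbar 1 1 0 a b x {4,5,7} = \<i> * x {4,6} + x {6,7}" "dbar 1 1 0 a b x {4,6,7} = - x {5,6}"
  by (simp_all add: dbar_expand[OF assms] eval_simps)

lemma del_02_dbar_11_coeffs:
  fixes a b :: real and x y1 :: form
  assumes x: "bideg 0 2 x" and y1: "bideg 1 1 y1"
  defines "D \<equiv> del 1 1 0 a b x + dbar 1 1 0 a b y1"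
  shows "D {0,4,5} = x {4,6} - \<i> * b * x {4,7} + a * x {5,6} - y1 {0,6} - y1 {2,4} + a * y1 {2,5} - \<i> * b * y1 {3,4}"
    "D {0,4,6} = - \<i> * x {4,7} + a * y1 {2,6} - \<i> * y1 {3,4}"
    "D {0,5,6} = - \<i> * x {5,7} + \<i> * b * x {6,7} + y1 {2,6} - \<i> * y1 {3,5} + \<i> * b * y1 {3,6}"
    "D {0,5,7} = x {6,7} + \<i> * y1 {0,6} - y1 {1,5} + y1 {2,7} + \<i> * b * y1 {3,7}"
    "D {0,6,7} = - y1 {1,6} + \<i> * y1 {3,7}"
    "D {1,4,5} = x {4,7} + x {5,6} - \<i> * b * x {5,7} - y1 {1,6} - y1 {2,5} + y1 {3,4} - \<i> * b * y1 {3,5}"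
    "D {1,4,6} = - \<i> * b * x {6,7} - y1 {2,6} - \<i> * b * y1 {3,6}"
    "D {1,4,7} = - x {6,7} - y1 {1,5} - \<i> * y1 {2,4} - y1 {2,7} - \<i> * b * y1 {3,7}"
    "D {1,5,7} = \<i> * y1 {1,6} - \<i> * y1 {2,5} - y1 {3,7}"
    "D {2,4,7} = - y1 {2,5} - \<i> * y1 {3,7}"
  unfolding D_def
  by (simp_all add: del_expand[OF x] dbar_expand[OF y1] eval_simps) (simp_all add: algebra_simps insert_commute)

lemma del_11_dbar_20_coeffs:
  fixes a b :: real and y1 y2 :: form
  assumes y1: "bideg 1 1 y1" and y2: "bideg 2 0 y2"
  defines "D \<equiv> del 1 1 0 a b y1 + dbar 1 1 0 a b y2"
  shows "D {0,1,4} = y1 {0,6} - \<i> * b * y1 {0,7} - a * y1 {1,6} + y1 {2,4} + y2 {0,2} + \<i> * b * y2 {0,3} + a * y2 {1,2}"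
    "D {0,1,7} = y1 {2,7} - \<i> * y2 {0,2}"
    "D {0,2,4} = - \<i> * y1 {0,7} - a * y1 {2,6} + \<i> * y2 {0,3}"
    "D {0,2,7} = - y2 {1,2}"
  unfolding D_def
  by (simp_all add: del_expand[OF y1] dbar_expand[OF y2] eval_simps) (simp_all add: algebra_simps insert_commute)

lemma Z3_beta_coeff_eq_0:
  fixes a b :: real
  assumes Z3: "x \<in> Zr (del 1 1 0 a b) (dbar 1 1 0 a b) 3 0 2"
  shows "x {4,6} = 0"
proof -
  have x: "bideg 0 2 x" and "dbar 1 1 0 a b x = 0"
    using Z3 by (simp_all add: Zr_def)
  then have x67: "x {6,7} = - \<i> * x {4,6}" and x56: "x {5,6} = 0"
    using dbar_02_coeffs[OF x, of a b] by (simp_all add: eq_neg_iff_add_eq_0 add.commute)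
  obtain y1 y2 where "bideg (0 + 1) (2 - 1) y1" "bideg (0 + 2) (2 - 2) y2"
    and e1: "del 1 1 0 a b x + dbar 1 1 0 a b y1 = 0" and e2: "del 1 1 0 a b y1 + dbar 1 1 0 a b y2 = 0"
    using Zr_zigzag3[OF Z3 order_refl] by blast
  then have y1: "bideg 1 1 y1" and y2: "bideg 2 0 y2"
    by simp_all
  note q = del_02_dbar_11_coeffs[OF x y1, of a b, unfolded e1 zero_fun_apply]
  note r = del_11_dbar_20_coeffs[OF y1 y2, of a b, unfolded e2 zero_fun_apply]
  have y37: "y1 {3,7} = 0" and y16: "y1 {1,6} = 0" and y25: "y1 {2,5} = 0"
  proof -
    have "y1 {1,6} = \<i> * y1 {3,7}" "y1 {2,5} = - \<i> * y1 {3,7}"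
      using q(5) q(10) by (simp_all add: algebra_simps)
    with q(9) show "y1 {3,7} = 0"
      by (simp add: algebra_simps)
    with \<open>y1 {1,6} = \<i> * y1 {3,7}\<close> \<open>y1 {2,5} = - \<i> * y1 {3,7}\<close>
    show "y1 {1,6} = 0" "y1 {2,5} = 0"
      by simp_all
  qed
  have "x {5,7} + y1 {3,5} = 0"
    using q(3) q(7) i_squared by algebra
  then have x47_y34: "x {4,7} + y1 {3,4} = 0"
    using q(6) x56 y16 y25 by algebra
  then have "a * y1 {2,6} = 0"
    using q(2) i_squared by algebra
  then have "y2 {0,3} = y1 {0,7}"
    using r(3) i_squared by algebra
  then have "y1 {0,6} + y1 {2,4} = - y2 {0,2}"
    using r(1) r(4) y16 by (simp add: algebra_simps eq_neg_iff_add_eq_0)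
  moreover have "y2 {0,2} = - \<i> * y1 {2,7}"
    using r(2) i_squared by algebra
  ultimately have y06_y24: "y1 {0,6} + y1 {2,4} = \<i> * y1 {2,7}"
    by simp
  have "x {4,6} = \<i> * y1 {2,7}"
    using q(1) x47_y34 y06_y24 x56 y25 by algebra
  moreover have "2 * x {4,6} = - \<i> * y1 {2,7}"
    using q(4) q(8) x67 y37 y06_y24 i_squared by algebra
  ultimately show ?thesis
    using i_squared by algebra
qed

lemma dbar_closed_02_decomposition:
  assumes x: "bideg 0 2 x" and dx: "dbar 1 1 0 a b x = 0"
  obtains c z where "bideg 0 1 z" "x - (smult c alpha + smult (x {4,6}) beta) = dbar 1 1 0 a b z"
proof -
  define c where "c = - (x {5,7} + \<i> * x {4,5}) / 2"
  define z where "z = smult (x {4,7}) (basis {5}) + smult (x {4,5} - \<i> * c) (basis {6})"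
  have x67: "x {6,7} = - \<i> * x {4,6}" and x56: "x {5,6} = 0"
    using dbar_02_coeffs[OF x, of a b] dx by (simp_all add: eq_neg_iff_add_eq_0 add.commute)
  have z: "bideg 0 1 z"
    unfolding z_def by (intro bideg_add bideg_smult bideg_basis) (simp_all add: gens_def pdeg_def qdeg_def)
  have "bideg 0 2 (x - (smult c alpha + smult (x {4,6}) beta) - dbar 1 1 0 a b z)"
    using bideg_dbar[OF z] by (intro bideg_diff bideg_add bideg_smult x bideg_alpha bideg_beta) simp
  then have "x - (smult c alpha + smult (x {4,6}) beta) - dbar 1 1 0 a b z = 0"
    by (rule bideg_eq_zeroI) (simp add: alpha_eq beta_eq z_def x67 x56 eval_simps; simp add: c_def field_simps)
  with z show ?thesis
    using that by simp
qed

lemma alpha_beta_independent_mod_dbar: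
  assumes z: "bideg 0 1 z" and eq: "smult c1 alpha + smult c2 beta = dbar 1 1 0 a b z"
  shows "c1 = 0 \<and> c2 = 0"
proof -
  have "c2 = 0" "c1 * \<i> = z {6}" "c1 = \<i> * z {6}"
    using fun_cong[OF eq, of "{4,6}"] fun_cong[OF eq, of "{4,5}"] fun_cong[OF eq, of "{5,7}"]
      dbar_01_coeffs[OF z, of a b]
    by (simp_all add: alpha_eq beta_eq basis_apply)
  then have "2 * c1 = 0" "c2 = 0"
    using i_squared by algebra+
  then show ?thesis
    by simp
qed

lemma B_page_eq: "1 \<le> r \<Longrightarrow> B_page 1 1 0 a b r 0 2 = {dbar 1 1 0 a b z |z. bideg 0 1 z}"
  unfolding B_page_def using bideg_dbar[of 0 1 _ 1 1 0 a b] by (auto simp: Br_bottom_row)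

lemma alpha_in_Z: "alpha \<in> Z_page 1 1 0 a b r 0 2"
  unfolding Z_page_def
  by (rule Zr_all_pagesI[where y = alpha_partner])
    (simp_all add: bideg_alpha dbar_alpha bideg_alpha_partner del_alpha_dbar_exact del_alpha_partner)

lemma beta_in_Z2: "beta \<in> Z_page 1 1 0 a b 2 0 2"
  unfolding Z_page_def
  by (rule Zr_2I[where y = "beta_partner a"])
    (simp_all add: bideg_beta dbar_beta bideg_beta_partner del_beta_dbar_exact)

lemma lincomb_Cons: "lincomb (c # cs) (v # vs) = smult c v + lincomb cs vs"
  unfolding lincomb_def length_Cons sum.lessThan_Suc_shift by simp

lemma lincomb_Nil: "lincomb cs [] = 0"
  by (simp add: lincomb_def)

lemma classes_basis_E12:
  assumes r: "r \<in> {1, 2}"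
  shows "classes_basis (Z_page 1 1 0 a b r 0 2) (B_page 1 1 0 a b r 0 2) [alpha, beta]"
  unfolding classes_basis_def
proof (intro conjI allI impI ballI)
  have "Z_page 1 1 0 a b 2 0 2 \<subseteq> Z_page 1 1 0 a b r 0 2"
    unfolding Z_page_def using r by (intro Zr_antimono) auto
  then show "set [alpha, beta] \<subseteq> Z_page 1 1 0 a b r 0 2"
    using alpha_in_Z beta_in_Z2 by auto
next
  fix cs c
  assume "length cs = length [alpha, beta]" and "lincomb cs [alpha, beta] \<in> B_page 1 1 0 a b r 0 2"
    and "c \<in> set cs"
  then obtain c1 c2 z where "cs = [c1, c2]" "bideg 0 1 z"
    "smult c1 alpha + smult c2 beta = dbar 1 1 0 a b z"
    using r by (auto simp: B_page_eq lincomb_Cons lincomb_Nil numeral_2_eq_2 length_Suc_conv)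
  then show "c = 0"
    using alpha_beta_independent_mod_dbar \<open>c \<in> set cs\<close> by auto
next
  fix x
  assume "x \<in> Z_page 1 1 0 a b r 0 2"
  then have "bideg 0 2 x" "dbar 1 1 0 a b x = 0"
    by (simp_all add: Z_page_def Zr_def)
  then obtain c z where "bideg 0 1 z" "x - (smult c alpha + smult (x {4,6}) beta) = dbar 1 1 0 a b z"
    by (rule dbar_closed_02_decomposition)
  then show "\<exists>cs. length cs = length [alpha, beta] \<and> x - lincomb cs [alpha, beta] \<in> B_page 1 1 0 a b r 0 2"
    using r by (intro exI[of _ "[c, x {4,6}]"]) (auto simp: B_page_eq lincomb_Cons lincomb_Nil)
qed

lemma classes_basis_E3:
  assumes r: "3 \<le> r"
  shows "classes_basis (Z_page 1 1 0 a b r 0 2) (B_page 1 1 0 a b r 0 2) [alpha]"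
  unfolding classes_basis_def
proof (intro conjI allI impI ballI)
  show "set [alpha] \<subseteq> Z_page 1 1 0 a b r 0 2"
    using alpha_in_Z by simp
next
  fix cs c
  assume "length cs = length [alpha]" and "lincomb cs [alpha] \<in> B_page 1 1 0 a b r 0 2"
    and "c \<in> set cs"
  then obtain z where "cs = [c]" "bideg 0 1 z" "smult c alpha + smult 0 beta = dbar 1 1 0 a b z"
    using r by (auto simp: B_page_eq lincomb_Cons lincomb_Nil length_Suc_conv)
  then show "c = 0"
    using alpha_beta_independent_mod_dbar by blast
next
  fix x
  assume x: "x \<in> Z_page 1 1 0 a b r 0 2"
  then have "bideg 0 2 x" "dbar 1 1 0 a b x = 0"
    by (simp_all add: Z_page_def Zr_def)
  then obtain c z where "bideg 0 1 z" "x - (smult c alpha + smult (x {4,6}) beta) = dbar 1 1 0 a b z"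
    by (rule dbar_closed_02_decomposition)
  moreover have "x \<in> Zr (del 1 1 0 a b) (dbar 1 1 0 a b) 3 0 2"
    using x Zr_antimono[OF r] unfolding Z_page_def by blast
  then have "x {4,6} = 0"
    by (rule Z3_beta_coeff_eq_0)
  ultimately show "\<exists>cs. length cs = length [alpha] \<and> x - lincomb cs [alpha] \<in> B_page 1 1 0 a b r 0 2"
    using r by (intro exI[of _ "[c]"]) (auto simp: B_page_eq lincomb_Cons lincomb_Nil)
qed

theorem proposition2p5:
  fixes a b :: real
  defines "\<alpha> \<equiv> smult \<i> (wedge (wb 1) (wb 2)) - wedge (wb 2) (wb 4)"
      and "\<beta> \<equiv> wedge (wb 1) (wb 3) - smult \<i> (wedge (wb 3) (wb 4))"
  shows "\<forall>r\<in>{1, 2}. classes_basis (Z_page 1 1 0 a b r 0 2) (B_page 1 1 0 a b r 0 2) [\<alpha>, \<beta>]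
       \<and> (\<forall>r\<ge>3. classes_basis (Z_page 1 1 0 a b r 0 2) (B_page 1 1 0 a b r 0 2) [\<alpha>])"
  unfolding \<alpha>_def \<beta>_def alpha_def[symmetric] beta_def[symmetric]
  using classes_basis_E12 classes_basis_E3 by blast

end
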